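(* In the projected SGD setting, set the step sizes $\eta_t=\frac{1}{\lambda(t+32)}$. Then for any $\delta\in(0,1)$, $$\mathbb P\Big(\forall t\ge1:\ L_t\le1008\cdot\frac{B^2}{\lambda^2}\cdot\frac{\log(\delta^{-1})+2\log\log(t+9)}{t+32}\Big)\ge1-\delta.$$
   Context: Projected SGD setting: $\mathcal X\subset\mathbb R^d$ is a compact convex set with non-empty interior; $F:\mathcal X\to\mathbb R$ is differentiable and $\lambda$-strongly convex ($\lambda>0$): $F(\bm y)\ge F(\bm x)+\langle\bm y-\bm x,\nabla F(\bm x)\rangle+\frac\lambda2\|\bm y-\bm x\|^2$ for all $\bm x,\bm y\in\mathcal X$; $\bm x^*$ is the minimizer of $F$ over $\mathcal X$. $\bm\xi_1,\bm\xi_2,\dots$ are i.i.d. random vectors in $\mathbb R^{d_1}$, and $g:\mathcal X\times\mathbb R^{d_1}\to\mathbb R^d$ is measurable with $\mathbb E\big(g(\bm x_{t-1},\bm\xi_t)\mid\bm\xi_1,\dots,\bm\xi_{t-1}\big)=\nabla F(\bm x_{t-1})$ and $\max\{\|g-\nabla F\|,\|g\|\}\le B$ almost surely, for a constant $B>0$. $\Pi_{\mathcal X}(\bm y)=\arg\min_{\bm x\in\mathcal X}\|\bm x-\bm y\|$ is the Euclidean projection. Given $\bm x_0\in\mathcal X$ and deterministic step sizes $\eta_t>0$, the iterates are $\bm x_t=\Pi_{\mathcal X}\big(\bm x_{t-1}-\eta_t g(\bm x_{t-1},\bm\xi_t)\big)$. $\mathcal F_t=\sigma(\bm\xi_1,\dots,\bm\xi_t)$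 and $L_t:=\|\bm x_t-\bm x^*\|^2$. *)

theory Defs
  imports "HOL-Analysis.Analysis" "HOL-Probability.Probability"
begin

definition sgd_filtration :: "'w measure \<Rightarrow> (nat \<Rightarrow> 'w \<Rightarrow> 'e::topological_space) \<Rightarrow> nat \<Rightarrow> 'w measure" where
  "sgd_filtration M \<xi> t =
     sigma (space M) {\<xi> i -` A \<inter> space M | i A. i \<in> {1..t} \<and> A \<in> sets borel}"

fun sgd_iter :: "'x::euclidean_space set \<Rightarrow> (nat \<Rightarrow> real) \<Rightarrow> ('x \<Rightarrow> 'e \<Rightarrow> 'x) \<Rightarrow> 'x
                  \<Rightarrow> (nat \<Rightarrow> 'w \<Rightarrow> 'e) \<Rightarrow> nat \<Rightarrow> 'w \<Rightarrow> 'x" where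
  "sgd_iter X \<eta> g x0 \<xi> 0 \<omega> = x0"
| "sgd_iter X \<eta> g x0 \<xi> (Suc t) \<omega> =
     closest_point X (sgd_iter X \<eta> g x0 \<xi> t \<omega> - \<eta> (Suc t) *\<^sub>R g (sgd_iter X \<eta> g x0 \<xi> t \<omega>) (\<xi> (Suc t) \<omega>))"

end

theory Submission
  imports Defs
begin

text \<open>
  Write \<open>a\<^sub>t = t + 32\<close> and \<open>\<ell>\<^sub>t = (\<lambda>/B)\<^sup>2 \<parallel>x\<^sub>t - x\<^sup>*\<parallel>\<^sup>2\<close>. Non-expansiveness of the projection and strong
  convexity give \<open>\<ell>\<^sub>t \<le> (1 - 2/a\<^sub>t) \<ell>\<^sub>t\<^sub>-\<^sub>1 + (2/a\<^sub>t) D\<^sub>t + 1/a\<^sub>t\<^sup>2\<close>, where \<open>D\<^sub>t\<close> is a martingale difference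
  with \<open>D\<^sub>t\<^sup>2 \<le> \<ell>\<^sub>t\<^sub>-\<^sub>1 \<le> 4\<close>. Hence for every \<open>A \<ge> 0\<close> the process
  \<open>exp (\<theta>\<^sub>A(a\<^sub>t) \<ell>\<^sub>t - \<Sum>\<^sub>r\<^sub>=\<^sub>1\<^sup>t \<theta>\<^sub>A(a\<^sub>r)/a\<^sub>r\<^sup>2)\<close> with \<open>\<theta>\<^sub>A(a) = a\<^sup>2 / (8 (a + A))\<close> is a nonnegative
  supermartingale starting below \<open>e\<^sup>1\<^sup>6\<close>, and Ville's maximal inequality bounds the probability that
  it ever exceeds \<open>e\<^sup>1\<^sup>6/\<delta>\<close>. The times with \<open>33 \<cdot> 2\<^sup>k\<^sup>-\<^sup>1 < a\<^sub>t \<le> 33 \<cdot> 2\<^sup>k\<close> form the \<open>k\<close>-th epoch;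
  taking \<open>A = 33 \<cdot> 2\<^sup>k\<close> there gives \<open>\<theta>\<^sub>A(a\<^sub>t) \<ge> a\<^sub>t/24\<close>, and a union bound over the epochs
  with confidences \<open>\<delta>/((k+1)(k+2))\<close> costs only the \<open>log log t\<close> term.
\<close>

section \<open>Strong convexity and projections\<close>

lemma closest_point_step_sq:
  fixes y v z :: "'a::euclidean_space"
  assumes "convex X" "closed X" "z \<in> X"
  shows "(norm (closest_point X (y - v) - z))\<^sup>2 \<le> (norm (y - z))\<^sup>2 - 2 * ((y - z) \<bullet> v) + (norm v)\<^sup>2"
proof -
  have "norm (closest_point X (y - v) - z) \<le> norm ((y - z) - v)"
    using closest_point_lipschitz[OF assms(1,2), of "y - v" z] assms(3)
    by (auto simp: closest_point_self dist_norm algebra_simps)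
  then have "(norm (closest_point X (y - v) - z))\<^sup>2 \<le> (norm ((y - z) - v))\<^sup>2"
    by (simp add: power_mono)
  also have "\<dots> = (norm (y - z))\<^sup>2 - 2 * ((y - z) \<bullet> v) + (norm v)\<^sup>2"
    by (simp add: power2_norm_eq_inner inner_diff_left inner_diff_right inner_commute)
  finally show ?thesis .
qed

locale strongly_convex_minimum =
  fixes X :: "'x::real_inner set" and F :: "'x \<Rightarrow> real" and gradF :: "'x \<Rightarrow> 'x"
    and lam :: real and xstar :: 'x
  assumes convex: "convex X" and lam_pos: "lam > 0"
    and strongly_convex: "\<And>x y. x \<in> X \<Longrightarrow> y \<in> X \<Longrightarrow>
           F y \<ge> F x + (y - x) \<bullet> gradF x + lam / 2 * (norm (y - x))\<^sup>2"
    and minimizer_in: "xstar \<in> X" and minimal: "\<And>y. y \<in> X \<Longrightarrow> F xstar \<le> F y"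
begin

lemma quadratic_growth:
  assumes y: "y \<in> X"
  shows "lam / 2 * (norm (y - xstar))\<^sup>2 \<le> F y - F xstar"
proof (rule field_le_mult_one_interval)
  fix z :: real assume z: "0 < z" "z < 1"
  define s where "s = 1 - z"
  define h where "h = y - xstar"
  define w where "w = xstar + s *\<^sub>R h"
  have s: "0 < s" "s < 1" using z by (auto simp: s_def)
  have "w = (1 - s) *\<^sub>R xstar + s *\<^sub>R y" by (simp add: w_def h_def algebra_simps)
  then have w: "w \<in> X" using convex minimizer_in y s by (auto intro: convexD)
  have "xstar - w = (- s) *\<^sub>R h" "y - w = (1 - s) *\<^sub>R h"
    by (simp_all add: w_def h_def algebra_simps)
  then have at_xstar: "F w + (- s) * (h \<bullet> gradF w) + lam / 2 * (s\<^sup>2 * (norm h)\<^sup>2) \<le> F xstar"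
    and at_y: "F w + (1 - s) * (h \<bullet> gradF w) + lam / 2 * ((1 - s)\<^sup>2 * (norm h)\<^sup>2) \<le> F y"
    using strongly_convex[OF w minimizer_in] strongly_convex[OF w y] s
    by (simp_all add: power_mult_distrib)
  \<comment> \<open>The first-order terms cancel in the convex combination with weights \<open>1 - s\<close> and \<open>s\<close>.\<close>
  have "(1 - s) * (F w + (- s) * (h \<bullet> gradF w) + lam / 2 * (s\<^sup>2 * (norm h)\<^sup>2))
      + s * (F w + (1 - s) * (h \<bullet> gradF w) + lam / 2 * ((1 - s)\<^sup>2 * (norm h)\<^sup>2))
      \<le> (1 - s) * F xstar + s * F y"
    using s by (intro add_mono mult_left_mono at_xstar at_y) auto
  then have "F w + lam / 2 * s * (1 - s) * (norm h)\<^sup>2 \<le> (1 - s) * F xstar + s * F y"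
    by (simp add: field_simps power2_eq_square)
  with minimal[OF w] have "s * (lam / 2 * (1 - s) * (norm h)\<^sup>2) \<le> s * (F y - F xstar)"
    by (simp add: algebra_simps)
  then have "lam / 2 * (1 - s) * (norm h)\<^sup>2 \<le> F y - F xstar"
    using s by simp
  then show "z * (lam / 2 * (norm (y - xstar))\<^sup>2) \<le> F y - F xstar"
    by (simp add: s_def h_def algebra_simps)
qed

lemma inner_gradient_ge:
  assumes y: "y \<in> X"
  shows "lam * (norm (y - xstar))\<^sup>2 \<le> (y - xstar) \<bullet> gradF y"
proof -
  have "F y - ((y - xstar) \<bullet> gradF y) + lam / 2 * (norm (y - xstar))\<^sup>2 \<le> F xstar"
    using strongly_convex[OF y minimizer_in] by (simp add: norm_minus_commute inner_diff_left)
  then show ?thesis using quadratic_growth[OF y] by simp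
qed

lemma dist_minimizer_le_norm_gradient:
  assumes y: "y \<in> X"
  shows "lam * norm (y - xstar) \<le> norm (gradF y)"
proof (cases "y = xstar")
  case False
  have "lam * norm (y - xstar) * norm (y - xstar) \<le> (y - xstar) \<bullet> gradF y"
    using inner_gradient_ge[OF y] by (simp add: power2_eq_square mult.assoc)
  also have "\<dots> \<le> norm (gradF y) * norm (y - xstar)"
    by (metis mult.commute norm_cauchy_schwarz)
  finally show ?thesis by (rule mult_right_le_imp_le) (use False in simp)
qed simp

end

section \<open>Maximal inequality and union bound\<close>

lemma sets_sublevel_adapted:
  fixes Y :: "nat \<Rightarrow> 'a \<Rightarrow> real" and Fs :: "nat \<Rightarrow> 'a measure"
  assumes subalg: "\<And>n. subalgebra M (Fs n)" and mono: "\<And>n. sets (Fs n) \<subseteq> sets (Fs (Suc n))"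
    and adapted: "\<And>n. Y n \<in> borel_measurable (Fs n)"
  shows "{\<omega> \<in> space M. \<forall>m<Suc n. Y m \<omega> < c} \<in> sets (Fs n)"
proof (induction n)
  case 0
  have "{\<omega> \<in> space (Fs 0). Y 0 \<omega> < c} \<in> sets (Fs 0)" using adapted[of 0] by measurable
  then show ?case using subalg[of 0] by (simp add: subalgebra_def)
next
  case (Suc n)
  have eq: "{\<omega> \<in> space M. \<forall>m<Suc (Suc n). Y m \<omega> < c}
      = {\<omega> \<in> space M. \<forall>m<Suc n. Y m \<omega> < c} \<inter> {\<omega> \<in> space (Fs (Suc n)). Y (Suc n) \<omega> < c}"
    using subalg[of "Suc n"] by (auto simp: subalgebra_def less_Suc_eq)
  have "{\<omega> \<in> space M. \<forall>m<Suc n. Y m \<omega> < c} \<in> sets (Fs (Suc n))"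
    using mono[of n] Suc.IH by (rule subsetD)
  moreover have "{\<omega> \<in> space (Fs (Suc n)). Y (Suc n) \<omega> < c} \<in> sets (Fs (Suc n))"
    using adapted[of "Suc n"] by measurable
  ultimately show ?case unfolding eq by (rule sets.Int)
qed

lemma (in prob_space) level_split_integral_le:
  fixes f :: "'a \<Rightarrow> real"
  assumes f: "integrable M f" and A: "A \<in> events"
  shows "c * prob (A \<inter> {\<omega> \<in> space M. c \<le> f \<omega>})
           + (\<integral>\<omega>. f \<omega> * indicator (A \<inter> {\<omega> \<in> space M. f \<omega> < c}) \<omega> \<partial>M)
         \<le> (\<integral>\<omega>. f \<omega> * indicator A \<omega> \<partial>M)"
proof -
  have [measurable]: "f \<in> borel_measurable M" using f by (rule borel_measurable_integrable)
  have sets: "A \<inter> {\<omega> \<in> space M. c \<le> f \<omega>} \<in> events" "A \<inter> {\<omega> \<in> space M. f \<omega> < c} \<in> events"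
    using A by measurable
  then have "c * prob (A \<inter> {\<omega> \<in> space M. c \<le> f \<omega>})
        + (\<integral>\<omega>. f \<omega> * indicator (A \<inter> {\<omega> \<in> space M. f \<omega> < c}) \<omega> \<partial>M)
      = (\<integral>\<omega>. c * indicator (A \<inter> {\<omega> \<in> space M. c \<le> f \<omega>}) \<omega>
          + f \<omega> * indicator (A \<inter> {\<omega> \<in> space M. f \<omega> < c}) \<omega> \<partial>M)"
    by (subst Bochner_Integration.integral_add)
       (auto simp: integrable_real_mult_indicator f emeasure_eq_measure)
  also have "\<dots> \<le> (\<integral>\<omega>. f \<omega> * indicator A \<omega> \<partial>M)"
    using sets A
    by (intro integral_mono integrable_real_mult_indicator f Bochner_Integration.integrable_add
        integrable_mult_right integrable_real_indicator)
       (auto simp: emeasure_eq_measure split: split_indicator)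
  finally show ?thesis .
qed

lemma (in prob_space) nonneg_supermartingale_maximal_ineq:
  fixes Y :: "nat \<Rightarrow> 'a \<Rightarrow> real" and Fs :: "nat \<Rightarrow> 'a measure"
  assumes subalg: "\<And>n. subalgebra M (Fs n)" and mono: "\<And>n. sets (Fs n) \<subseteq> sets (Fs (Suc n))"
    and adapted: "\<And>n. Y n \<in> borel_measurable (Fs n)"
    and integrable: "\<And>n. integrable M (Y n)" and nonneg: "\<And>n \<omega>. 0 \<le> Y n \<omega>"
    and super: "\<And>n N. N \<in> sets (Fs n) \<Longrightarrow>
          (\<integral>\<omega>. Y (Suc n) \<omega> * indicator N \<omega> \<partial>M) \<le> (\<integral>\<omega>. Y n \<omega> * indicator N \<omega> \<partial>M)"
  shows "c * prob {\<omega> \<in> space M. \<exists>n\<le>T. c \<le> Y n \<omega>} \<le> (\<integral>\<omega>. Y 0 \<omega> \<partial>M)"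
proof -
  define alive where "alive n = {\<omega> \<in> space M. \<forall>m<n. Y m \<omega> < c}" for n
  define hit where "hit n = {\<omega> \<in> space M. \<exists>m<n. c \<le> Y m \<omega>}" for n
  have [measurable]: "Y n \<in> borel_measurable M" for n
    using adapted subalg measurable_from_subalg by blast
  have alive_M: "alive n \<in> events" and hit_M: "hit n \<in> events" for n
    unfolding alive_def hit_def by measurable
  have alive_Suc: "alive (Suc n) = alive n \<inter> {\<omega> \<in> space M. Y n \<omega> < c}" for n
    by (auto simp: alive_def less_Suc_eq)
  have step: "c * prob (hit (Suc n)) + (\<integral>\<omega>. Y (Suc n) \<omega> * indicator (alive (Suc n)) \<omega> \<partial>M)
      \<le> c * prob (hit n) + (\<integral>\<omega>. Y n \<omega> * indicator (alive n) \<omega> \<partial>M)" for n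
  proof -
    define C where "C = alive n \<inter> {\<omega> \<in> space M. c \<le> Y n \<omega>}"
    have "hit (Suc n) = hit n \<union> C" "hit n \<inter> C = {}"
      by (auto simp: hit_def C_def alive_def less_Suc_eq not_less)
    then have hit_Suc: "prob (hit (Suc n)) = prob (hit n) + prob C"
      using hit_M alive_M by (simp add: C_def finite_measure_Union)
    have split: "c * prob C + (\<integral>\<omega>. Y n \<omega> * indicator (alive (Suc n)) \<omega> \<partial>M)
        \<le> (\<integral>\<omega>. Y n \<omega> * indicator (alive n) \<omega> \<partial>M)"
      unfolding C_def alive_Suc by (rule level_split_integral_le[OF integrable alive_M])
    have "alive (Suc n) \<in> sets (Fs n)"
      unfolding alive_def
      by (rule sets_sublevel_adapted[where M = M and Fs = Fs and Y = Y, OF subalg mono adapted])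
    then have "(\<integral>\<omega>. Y (Suc n) \<omega> * indicator (alive (Suc n)) \<omega> \<partial>M)
        \<le> (\<integral>\<omega>. Y n \<omega> * indicator (alive (Suc n)) \<omega> \<partial>M)"
      by (rule super)
    moreover have "c * prob (hit (Suc n)) = c * prob (hit n) + c * prob C"
      using hit_Suc by (simp add: distrib_left)
    ultimately show ?thesis using split by linarith
  qed
  have bound: "c * prob (hit n) + (\<integral>\<omega>. Y n \<omega> * indicator (alive n) \<omega> \<partial>M) \<le> (\<integral>\<omega>. Y 0 \<omega> \<partial>M)" for n
  proof (induction n)
    case 0
    have "(\<integral>\<omega>. Y 0 \<omega> * indicator (alive 0) \<omega> \<partial>M) = (\<integral>\<omega>. Y 0 \<omega> \<partial>M)"
      by (intro Bochner_Integration.integral_cong) (auto simp: alive_def)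
    then show ?case by (simp add: hit_def)
  next
    case (Suc n)
    then show ?case using step[of n] by linarith
  qed
  have "0 \<le> (\<integral>\<omega>. Y (Suc T) \<omega> * indicator (alive (Suc T)) \<omega> \<partial>M)"
    using nonneg by (intro integral_nonneg_AE) auto
  then have "c * prob (hit (Suc T)) \<le> (\<integral>\<omega>. Y 0 \<omega> \<partial>M)"
    using bound[of "Suc T"] by linarith
  moreover have "hit (Suc T) = {\<omega> \<in> space M. \<exists>n\<le>T. c \<le> Y n \<omega>}"
    by (auto simp: hit_def less_Suc_eq_le)
  ultimately show ?thesis by simp
qed

lemma (in prob_space) prob_Union_le_sums:
  assumes "range A \<subseteq> events" and "\<And>k. prob (A k) \<le> p k" and "p sums s"
  shows "prob (\<Union>k. A k) \<le> s"
proof -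
  have summable: "summable (\<lambda>k. prob (A k))"
    using assms by (intro summable_comparison_test[OF _ sums_summable[OF assms(3)]]) auto
  have "prob (\<Union>k. A k) \<le> (\<Sum>k. prob (A k))"
    using finite_measure_subadditive_countably[OF assms(1) summable] by simp
  also have "\<dots> \<le> (\<Sum>k. p k)" using assms summable by (intro suminf_le) (auto simp: sums_summable)
  finally show ?thesis using assms(3) by (simp add: sums_iff)
qed

section \<open>The exponential potential\<close>

lemma exp_le_one_plus_self_plus_sq:
  fixes y :: real
  assumes "\<bar>y\<bar> \<le> 1"
  shows "exp y \<le> 1 + y + y\<^sup>2"
proof (cases "y \<ge> 0")
  case True
  then show ?thesis using exp_bound assms by auto
next
  case False
  have "exp y * (1 - y) \<le> exp y * exp (- y)"
    using exp_ge_add_one_self[of "- y"] by (intro mult_left_mono) auto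
  also have "\<dots> = 1" by (simp flip: exp_add)
  also have "1 \<le> (1 + y + y\<^sup>2) * (1 - y)"
    using False by (simp add: algebra_simps power2_eq_square mult_nonpos_nonneg)
  finally show ?thesis by (rule mult_right_le_imp_le) (use False in auto)
qed

definition potential_weight :: "real \<Rightarrow> real \<Rightarrow> real" where
  "potential_weight A a = a\<^sup>2 / (8 * (a + A))"

lemma potential_weight_decrement:
  fixes a A :: real
  assumes a: "a \<ge> 4" and A: "A \<ge> 0"
  shows "a / (8 * (a + A)) * (a - 2) + 4 * (a / (8 * (a + A)))\<^sup>2 \<le> potential_weight A (a - 1)"
proof -
  define S where "S = a + A"
  have S: "S \<ge> 4" using a A by (simp add: S_def)
  have weight: "potential_weight A (a - 1) = (a - 1)\<^sup>2 / (8 * (S - 1))"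
    by (simp add: potential_weight_def S_def algebra_simps)
  have "potential_weight A (a - 1) - (a / (8 * S) * (a - 2) + 4 * (a / (8 * S))\<^sup>2)
      = (2 * S\<^sup>2 + S * (a * (a - 4)) + a\<^sup>2) / (16 * S\<^sup>2 * (S - 1))"
    unfolding weight using S by (simp add: field_simps power2_eq_square)
  also have "\<dots> \<ge> 0" using S a by (intro divide_nonneg_pos add_nonneg_nonneg mult_nonneg_nonneg) auto
  finally show ?thesis by (simp add: S_def)
qed

text \<open>One step of the potential, for \<open>l = \<ell>\<^sub>t\<^sub>-\<^sub>1\<close>, \<open>l' = \<ell>\<^sub>t\<close> and \<open>d = D\<^sub>t\<close>: the term linear in \<open>d\<close>
  is the one whose conditional expectation vanishes.\<close>
lemma exp_potential_step:
  fixes a A l l' d :: real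
  assumes a: "a \<ge> 4" and A: "A \<ge> 0" and l: "0 \<le> l" "l \<le> 4" and d: "d\<^sup>2 \<le> l"
    and recursion: "l' \<le> (1 - 2 / a) * l + 2 / a * d + 1 / a\<^sup>2"
  defines "b \<equiv> a / (8 * (a + A))"
  shows "exp (potential_weight A a * l' - 1 / (8 * (a + A)))
           \<le> exp (potential_weight A (a - 1) * l) + 2 * b * exp (b * (a - 2) * l) * d"
proof -
  have b: "0 \<le> b" "b \<le> 1 / 8" using a A by (auto simp: b_def field_simps)
  have "potential_weight A a = a * b" by (simp add: potential_weight_def b_def power2_eq_square)
  then have "potential_weight A a * l' \<le> a * b * ((1 - 2 / a) * l + 2 / a * d + 1 / a\<^sup>2)"
    using recursion b a by (simp add: mult_left_mono)
  also have "\<dots> = b * (a - 2) * l + 2 * b * d + b / a"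
    using a by (simp add: field_simps power2_eq_square)
  also have "b / a = 1 / (8 * (a + A))" using a by (simp add: b_def)
  finally have split: "exp (potential_weight A a * l' - 1 / (8 * (a + A)))
      \<le> exp (b * (a - 2) * l) * exp (2 * b * d)"
    by (simp flip: exp_add)
  have sq: "(2 * b * d)\<^sup>2 \<le> 4 * b\<^sup>2 * l" using d by (simp add: power_mult_distrib mult_left_mono)
  also have "\<dots> \<le> 4 * (1 / 8)\<^sup>2 * 4" using b l by (intro mult_mono power_mono) auto
  also have "\<dots> \<le> 1" by (simp add: power2_eq_square)
  finally have "\<bar>2 * b * d\<bar> \<le> 1" by (simp add: abs_square_le_1)
  then have "exp (2 * b * d) \<le> 1 + 4 * b\<^sup>2 * l + 2 * b * d"
    using exp_le_one_plus_self_plus_sq sq by fastforce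
  also have "\<dots> \<le> exp (4 * b\<^sup>2 * l) + 2 * b * d" using exp_ge_add_one_self by simp
  finally have linearised: "exp (2 * b * d) \<le> exp (4 * b\<^sup>2 * l) + 2 * b * d" .
  have weight: "b * (a - 2) * l + 4 * b\<^sup>2 * l \<le> potential_weight A (a - 1) * l"
    using mult_right_mono[OF potential_weight_decrement[OF a A, folded b_def] l(1)]
    by (simp add: algebra_simps)
  have "exp (b * (a - 2) * l) * exp (2 * b * d)
      \<le> exp (b * (a - 2) * l) * (exp (4 * b\<^sup>2 * l) + 2 * b * d)"
    using linearised by (simp add: mult_left_mono)
  also have "\<dots> = exp (b * (a - 2) * l + 4 * b\<^sup>2 * l) + 2 * b * exp (b * (a - 2) * l) * d"
    unfolding exp_add distrib_left by (simp add: mult_ac)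
  also have "\<dots> \<le> exp (potential_weight A (a - 1) * l) + 2 * b * exp (b * (a - 2) * l) * d"
    using weight by simp
  finally show ?thesis using split by linarith
qed

lemma potential_weight_ge:
  fixes a A :: real
  assumes "0 < a" "0 \<le> A" "A \<le> 2 * a"
  shows "a / 24 \<le> potential_weight A a"
proof -
  have "a / 24 = a\<^sup>2 / (8 * (3 * a))" using assms by (simp add: power2_eq_square)
  also have "\<dots> \<le> a\<^sup>2 / (8 * (a + A))" using assms by (intro divide_left_mono) auto
  finally show ?thesis by (simp add: potential_weight_def)
qed

lemma sum_potential_increments_le:
  fixes A :: real
  assumes "real t \<le> A"
  shows "(\<Sum>r\<in>{1..t}. 1 / (8 * (real r + 32 + A))) \<le> 1 / 8"
proof -
  have "(\<Sum>r\<in>{1..t}. 1 / (8 * (real r + 32 + A))) \<le> real (card {1..t}) * (1 / (8 * (32 + A)))"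
    using assms by (intro sum_bounded_above) (auto simp: frac_le)
  also have "\<dots> \<le> 1 / 8" using assms by (simp add: field_simps)
  finally show ?thesis .
qed

section \<open>Epochs\<close>

definition epoch_confidence :: "real \<Rightarrow> nat \<Rightarrow> real" where
  "epoch_confidence \<delta> k = \<delta> / ((real k + 1) * (real k + 2))"

lemma epoch_confidence_sums: "epoch_confidence \<delta> sums \<delta>"
proof -
  have "(\<lambda>k. 1 / (real k + 1)) \<longlonglongrightarrow> 0"
    using LIMSEQ_inverse_real_of_nat by (simp add: inverse_eq_divide add.commute)
  from sums_mult[OF telescope_sums'[OF this], of \<delta>] show ?thesis
    by (simp add: epoch_confidence_def[abs_def] field_simps)
qed

lemma epoch_exists: "\<exists>k. real t + 32 \<le> 33 * 2 ^ k \<and> 33 * 2 ^ k < 2 * (real t + 32)"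
proof -
  have "real t < 2 ^ t" using less_exp[of t] by (metis of_nat_less_iff of_nat_numeral of_nat_power)
  then have ex: "\<exists>k. real t + 32 \<le> 33 * 2 ^ k"
    using one_le_power[of "2 :: real" t] by (intro exI[of _ t]) linarith
  define k where "k = (LEAST k. real t + 32 \<le> 33 * 2 ^ k)"
  have "real t + 32 \<le> 33 * 2 ^ k" unfolding k_def by (rule LeastI_ex[OF ex])
  moreover have "33 * 2 ^ k < 2 * (real t + 32)"
  proof (cases k)
    case (Suc j)
    then have "j < k" by simp
    then have "\<not> real t + 32 \<le> 33 * 2 ^ j" unfolding k_def by (rule not_less_Least)
    then show ?thesis using Suc by simp
  qed simp
  ultimately show ?thesis by blast
qed

lemma ln_plus_9_ge_2: "2 \<le> ln (real t + 9)"
proof -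
  have "exp (2 :: real) = exp 1 * exp 1" by (simp flip: exp_add)
  also have "\<dots> \<le> 3 * 3" using exp_le by (intro mult_mono) auto
  finally show ?thesis by (subst ln_ge_iff) auto
qed

lemma ln_2_ge_half: "1 / 2 \<le> ln (2 :: real)"
  using exp_half_le2 by (subst ln_ge_iff) auto

lemma ln_ln_plus_9_ge_half: "1 / 2 \<le> ln (ln (real t + 9))"
proof -
  have "1 / 2 \<le> ln (2 :: real)" by (rule ln_2_ge_half)
  also have "\<dots> \<le> ln (ln (real t + 9))" using ln_plus_9_ge_2[of t] by simp
  finally show ?thesis .
qed

lemma ln_epoch_index_le:
  assumes "2 ^ k < real t + 9"
  shows "ln ((real k + 1) * (real k + 2)) \<le> 4 + 2 * ln (ln (real t + 9))"
proof -
  define L where "L = ln (real t + 9)"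
  have L: "L \<ge> 2" unfolding L_def by (rule ln_plus_9_ge_2)
  have "real k * ln 2 < L" using assms by (simp add: L_def ln_realpow[symmetric] del: ln_realpow)
  moreover have "real k / 2 \<le> real k * ln 2"
    using mult_left_mono[OF ln_2_ge_half, of "real k"] by simp
  ultimately have "real k + 2 \<le> 3 * L" using L by simp
  then have "(real k + 1) * (real k + 2) \<le> 9 * (L * L)"
    using mult_mono[of "real k + 1" "3 * L" "real k + 2" "3 * L"] by simp
  also have "\<dots> \<le> exp 4 * (L * L)"
  proof -
    have "3 * 3 \<le> exp (2 :: real) * exp 2" using exp_ge_add_one_self[of 2] by (intro mult_mono) auto
    then show ?thesis by (intro mult_right_mono) (simp_all flip: exp_add)
  qed
  finally have "ln ((real k + 1) * (real k + 2)) \<le> ln (exp 4 * (L * L))" using L by simp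
  also have "\<dots> = 4 + 2 * ln L" using L by (simp add: ln_mult)
  finally show ?thesis by (simp add: L_def)
qed

section \<open>Projected SGD\<close>

locale projected_sgd = prob_space M + strongly_convex_minimum X F gradF lam xstar
  for M :: "'w measure" and X :: "'x::euclidean_space set" and F gradF lam xstar +
  fixes B :: real and x0 :: 'x and \<xi> :: "nat \<Rightarrow> 'w \<Rightarrow> 'e::euclidean_space"
    and g :: "'x \<Rightarrow> 'e \<Rightarrow> 'x" and \<eta> :: "nat \<Rightarrow> real"
  assumes closed: "closed X"
    and \<xi>_measurable: "\<And>i. i \<ge> 1 \<Longrightarrow> \<xi> i \<in> borel_measurable M"
    and g_measurable: "(\<lambda>(x, e). g x e) \<in> borel_measurable (restrict_space borel (X \<times> UNIV))"
    and B_pos: "B > 0" and x0: "x0 \<in> X"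
    and step: "\<And>t. \<eta> t = 1 / (lam * (real t + 32))"
    and unbiased: "\<And>t b. t \<ge> 1 \<Longrightarrow> b \<in> Basis \<Longrightarrow>
           AE \<omega> in M. real_cond_exp M (sgd_filtration M \<xi> (t - 1))
               (\<lambda>\<omega>. g (sgd_iter X \<eta> g x0 \<xi> (t - 1) \<omega>) (\<xi> t \<omega>) \<bullet> b) \<omega>
             = gradF (sgd_iter X \<eta> g x0 \<xi> (t - 1) \<omega>) \<bullet> b"
    and bounded: "AE \<omega> in M. \<forall>t\<ge>1.
           max (norm (g (sgd_iter X \<eta> g x0 \<xi> (t - 1) \<omega>) (\<xi> t \<omega>) - gradF (sgd_iter X \<eta> g x0 \<xi> (t - 1) \<omega>)))
               (norm (g (sgd_iter X \<eta> g x0 \<xi> (t - 1) \<omega>) (\<xi> t \<omega>))) \<le> B"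
begin

abbreviation x :: "nat \<Rightarrow> 'w \<Rightarrow> 'x" where "x \<equiv> sgd_iter X \<eta> g x0 \<xi>"
abbreviation filt :: "nat \<Rightarrow> 'w measure" where "filt \<equiv> sgd_filtration M \<xi>"

definition stoch_grad :: "nat \<Rightarrow> 'w \<Rightarrow> 'x" where
  "stoch_grad t \<omega> = g (x (t - 1) \<omega>) (\<xi> t \<omega>)"

lemma iterate_in: "x t \<omega> \<in> X"
  using closest_point_in_set[OF closed] minimizer_in x0 by (cases t) auto

lemma filt_generator_subset: "{\<xi> i -` A \<inter> space M | i A. i \<in> {1..t} \<and> A \<in> sets borel} \<subseteq> Pow (space M)"
  by auto

lemma space_filt [simp]: "space (filt t) = space M"
  unfolding sgd_filtration_def by (rule space_measure_of[OF filt_generator_subset])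

lemma sets_filt:
  "sets (filt t) = sigma_sets (space M) {\<xi> i -` A \<inter> space M | i A. i \<in> {1..t} \<and> A \<in> sets borel}"
  unfolding sgd_filtration_def by (rule sets_measure_of[OF filt_generator_subset])

lemma sets_filt_mono: "s \<le> t \<Longrightarrow> sets (filt s) \<subseteq> sets (filt t)"
  unfolding sets_filt by (rule sigma_sets_mono') (fastforce intro: le_trans)

lemma subalgebra_filt: "subalgebra M (filt t)"
proof -
  have "sets (filt t) \<subseteq> sets M"
    unfolding sets_filt by (rule sets.sigma_sets_subset) (auto intro!: measurable_sets \<xi>_measurable)
  then show ?thesis by (simp add: subalgebra_def)
qed

lemma measurable_filt_mono: "f \<in> measurable (filt s) N \<Longrightarrow> s \<le> t \<Longrightarrow> f \<in> measurable (filt t) N"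
  using measurable_from_subalg sets_filt_mono by (metis space_filt subalgebra_def)

lemma measurable_filt_M: "f \<in> measurable (filt t) N \<Longrightarrow> f \<in> measurable M N"
  using measurable_from_subalg subalgebra_filt by blast

lemma \<xi>_measurable_filt: "1 \<le> i \<Longrightarrow> i \<le> t \<Longrightarrow> \<xi> i \<in> borel_measurable (filt t)"
  by (rule measurableI) (auto simp: sets_filt intro: sigma_sets.Basic)

lemma stoch_grad_measurable_of_iterate:
  assumes "x t \<in> borel_measurable (filt t)"
  shows "stoch_grad (Suc t) \<in> borel_measurable (filt (Suc t))"
proof -
  have "(\<lambda>\<omega>. (x t \<omega>, \<xi> (Suc t) \<omega>)) \<in> borel_measurable (filt (Suc t))"
    using measurable_filt_mono[OF assms] \<xi>_measurable_filt[of "Suc t" "Suc t"]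
    by (auto simp: borel_prod[symmetric])
  then have "(\<lambda>\<omega>. (x t \<omega>, \<xi> (Suc t) \<omega>)) \<in> measurable (filt (Suc t)) (restrict_space borel (X \<times> UNIV))"
    using iterate_in by (intro measurable_restrict_space2) auto
  from measurable_comp[OF this g_measurable] show ?thesis by (simp add: stoch_grad_def[abs_def] o_def)
qed

lemma iterate_measurable: "x t \<in> borel_measurable (filt t)"
proof (induction t)
  case (Suc t)
  have "closest_point X \<in> borel_measurable borel"
    using closed convex minimizer_in
    by (intro borel_measurable_continuous_onI continuous_on_closest_point) auto
  moreover have "(\<lambda>\<omega>. x t \<omega> - \<eta> (Suc t) *\<^sub>R stoch_grad (Suc t) \<omega>) \<in> borel_measurable (filt (Suc t))"
    using measurable_filt_mono[OF Suc.IH] stoch_grad_measurable_of_iterate[OF Suc.IH] by measurable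
  ultimately show ?case by (simp add: stoch_grad_def measurable_comp[of _ _ borel, simplified o_def])
qed simp

lemma stoch_grad_measurable: "t \<ge> 1 \<Longrightarrow> stoch_grad t \<in> borel_measurable (filt t)"
  using stoch_grad_measurable_of_iterate[OF iterate_measurable, of "t - 1"] by simp

definition scaled_dist :: "nat \<Rightarrow> 'w \<Rightarrow> real" where
  "scaled_dist t \<omega> = lam\<^sup>2 / B\<^sup>2 * (norm (x t \<omega> - xstar))\<^sup>2"

text \<open>The martingale difference \<open>\<lambda>/B\<^sup>2 \<langle>x\<^sub>t\<^sub>-\<^sub>1 - x\<^sup>*, E(G\<^sub>t | F\<^sub>t\<^sub>-\<^sub>1) - G\<^sub>t\<rangle>\<close>, written
  coordinatewise because \<^const>\<open>real_cond_exp\<close> is only available for real-valued functions.\<close>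
definition noise :: "nat \<Rightarrow> 'w \<Rightarrow> real" where
  "noise t \<omega> = lam / B\<^sup>2 * (\<Sum>b\<in>Basis. ((x (t - 1) \<omega> - xstar) \<bullet> b) *
    (real_cond_exp M (filt (t - 1)) (\<lambda>\<omega>. stoch_grad t \<omega> \<bullet> b) \<omega> - stoch_grad t \<omega> \<bullet> b))"

lemma scaled_dist_nonneg: "0 \<le> scaled_dist t \<omega>"
  by (simp add: scaled_dist_def)

lemma scaled_dist_measurable: "scaled_dist t \<in> borel_measurable (filt t)"
  unfolding scaled_dist_def using iterate_measurable[of t] by measurable

lemma dist_sq_recursion:
  fixes \<omega> :: 'w
  assumes "t \<ge> 1"
  defines "y \<equiv> x (t - 1) \<omega>" and "G \<equiv> stoch_grad t \<omega>" and "a \<equiv> real t + 32"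
  shows "(norm (x t \<omega> - xstar))\<^sup>2 \<le> (1 - 2 / a) * (norm (y - xstar))\<^sup>2
           + 2 / (lam * a) * ((y - xstar) \<bullet> (gradF y - G)) + (norm G)\<^sup>2 / (lam\<^sup>2 * a\<^sup>2)"
proof -
  have a: "a > 0" and eta: "\<eta> t = 1 / (lam * a)" by (simp_all add: a_def step)
  have "x t \<omega> = closest_point X (y - \<eta> t *\<^sub>R G)"
    using assms(1) by (cases t) (simp_all add: y_def G_def stoch_grad_def)
  then have "(norm (x t \<omega> - xstar))\<^sup>2
      \<le> (norm (y - xstar))\<^sup>2 - 2 * ((y - xstar) \<bullet> (\<eta> t *\<^sub>R G)) + (norm (\<eta> t *\<^sub>R G))\<^sup>2"
    using closest_point_step_sq[OF convex closed minimizer_in, of y "\<eta> t *\<^sub>R G"] by simp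
  also have "\<dots> = (norm (y - xstar))\<^sup>2 - 2 / (lam * a) * ((y - xstar) \<bullet> gradF y)
      + 2 / (lam * a) * ((y - xstar) \<bullet> (gradF y - G)) + (norm G)\<^sup>2 / (lam\<^sup>2 * a\<^sup>2)"
    by (simp add: eta inner_diff_right algebra_simps power_mult_distrib power_divide)
  also have "\<dots> \<le> (1 - 2 / a) * (norm (y - xstar))\<^sup>2
      + 2 / (lam * a) * ((y - xstar) \<bullet> (gradF y - G)) + (norm G)\<^sup>2 / (lam\<^sup>2 * a\<^sup>2)"
  proof -
    have "2 / (lam * a) * (lam * (norm (y - xstar))\<^sup>2) \<le> 2 / (lam * a) * ((y - xstar) \<bullet> gradF y)"
      using inner_gradient_ge[OF iterate_in] lam_pos a by (intro mult_left_mono) (auto simp: y_def)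
    then show ?thesis using lam_pos a by (simp add: field_simps)
  qed
  finally show ?thesis .
qed

lemma scaled_dist_recursion:
  fixes \<omega> :: 'w
  assumes t: "t \<ge> 1" and G: "norm (stoch_grad t \<omega>) \<le> B"
  defines "y \<equiv> x (t - 1) \<omega>" and "a \<equiv> real t + 32"
  shows "scaled_dist t \<omega> \<le> (1 - 2 / a) * scaled_dist (t - 1) \<omega>
           + 2 / a * (lam / B\<^sup>2 * ((y - xstar) \<bullet> (gradF y - stoch_grad t \<omega>))) + 1 / a\<^sup>2"
proof -
  have a: "a > 0" by (simp add: a_def)
  have "scaled_dist t \<omega> \<le> lam\<^sup>2 / B\<^sup>2 * ((1 - 2 / a) * (norm (y - xstar))\<^sup>2
      + 2 / (lam * a) * ((y - xstar) \<bullet> (gradF y - stoch_grad t \<omega>))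
      + (norm (stoch_grad t \<omega>))\<^sup>2 / (lam\<^sup>2 * a\<^sup>2))"
    unfolding scaled_dist_def y_def a_def by (intro mult_left_mono dist_sq_recursion t) auto
  also have "\<dots> = (1 - 2 / a) * scaled_dist (t - 1) \<omega>
      + 2 / a * (lam / B\<^sup>2 * ((y - xstar) \<bullet> (gradF y - stoch_grad t \<omega>)))
      + (norm (stoch_grad t \<omega>) / B)\<^sup>2 / a\<^sup>2"
    using lam_pos B_pos a by (simp add: scaled_dist_def y_def field_simps power2_eq_square)
  also have "(norm (stoch_grad t \<omega>) / B)\<^sup>2 \<le> 1"
    using G B_pos by (simp add: power_le_one)
  finally show ?thesis using a by (simp add: divide_right_mono)
qed

lemma drift_sq_le_scaled_dist:
  assumes "norm (G - gradF (x t \<omega>)) \<le> B"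
  shows "(lam / B\<^sup>2 * ((x t \<omega> - xstar) \<bullet> (gradF (x t \<omega>) - G)))\<^sup>2 \<le> scaled_dist t \<omega>"
proof -
  have "\<bar>(x t \<omega> - xstar) \<bullet> (gradF (x t \<omega>) - G)\<bar> \<le> norm (x t \<omega> - xstar) * norm (gradF (x t \<omega>) - G)"
    by (rule Cauchy_Schwarz_ineq2)
  also have "\<dots> \<le> norm (x t \<omega> - xstar) * B"
    using assms by (intro mult_left_mono) (auto simp: norm_minus_commute)
  finally have "((x t \<omega> - xstar) \<bullet> (gradF (x t \<omega>) - G))\<^sup>2 \<le> (norm (x t \<omega> - xstar) * B)\<^sup>2"
    using power_mono[OF _ abs_ge_zero, of _ _ 2] by fastforce
  then have "(lam / B\<^sup>2)\<^sup>2 * ((x t \<omega> - xstar) \<bullet> (gradF (x t \<omega>) - G))\<^sup>2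
      \<le> (lam / B\<^sup>2)\<^sup>2 * (norm (x t \<omega> - xstar) * B)\<^sup>2"
    by (rule mult_left_mono) simp
  also have "\<dots> = scaled_dist t \<omega>"
    using B_pos by (simp add: scaled_dist_def field_simps power2_eq_square)
  finally show ?thesis by (simp only: power_mult_distrib)
qed

lemma AE_stoch_grad_bounded:
  "AE \<omega> in M. \<forall>t\<ge>1. norm (stoch_grad t \<omega> - gradF (x (t - 1) \<omega>)) \<le> B \<and> norm (stoch_grad t \<omega>) \<le> B"
  using bounded by eventually_elim (simp add: stoch_grad_def)

lemma AE_dist_le: "AE \<omega> in M. \<forall>t. lam * norm (x t \<omega> - xstar) \<le> 2 * B"
  using AE_stoch_grad_bounded
proof eventually_elim
  case (elim \<omega>)
  show ?case
  proof
    fix t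
    have "norm (gradF (x t \<omega>)) \<le> 2 * B"
      using elim[rule_format, of "Suc t"] norm_triangle_sub[of "gradF (x t \<omega>)" "stoch_grad (Suc t) \<omega>"]
      by (simp add: norm_minus_commute)
    then show "lam * norm (x t \<omega> - xstar) \<le> 2 * B"
      using dist_minimizer_le_norm_gradient[OF iterate_in] by (rule order_trans[rotated])
  qed
qed

lemma AE_scaled_dist_le_4: "AE \<omega> in M. \<forall>t. scaled_dist t \<omega> \<le> 4"
  using AE_dist_le
proof eventually_elim
  case (elim \<omega>)
  show ?case
  proof
    fix t
    have "(lam * norm (x t \<omega> - xstar))\<^sup>2 \<le> (2 * B)\<^sup>2"
      using elim lam_pos by (intro power_mono) auto
    then show "scaled_dist t \<omega> \<le> 4"
      using B_pos by (simp add: scaled_dist_def field_simps power_mult_distrib)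
  qed
qed

lemma AE_noise_eq:
  "AE \<omega> in M. \<forall>t\<ge>1.
     noise t \<omega> = lam / B\<^sup>2 * ((x (t - 1) \<omega> - xstar) \<bullet> (gradF (x (t - 1) \<omega>) - stoch_grad t \<omega>))"
proof -
  have "AE \<omega> in M. \<forall>b\<in>Basis. real_cond_exp M (filt (t - 1)) (\<lambda>\<omega>. stoch_grad t \<omega> \<bullet> b) \<omega>
      = gradF (x (t - 1) \<omega>) \<bullet> b" if "t \<ge> 1" for t
    using unbiased[OF that] by (subst AE_finite_all) (auto simp: stoch_grad_def)
  then have "AE \<omega> in M. \<forall>t\<ge>1. \<forall>b\<in>Basis. real_cond_exp M (filt (t - 1)) (\<lambda>\<omega>. stoch_grad t \<omega> \<bullet> b) \<omega>
      = gradF (x (t - 1) \<omega>) \<bullet> b"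
    by (simp add: AE_all_countable)
  then show ?thesis
  proof eventually_elim
    case (elim \<omega>)
    then show ?case
      by (auto simp: noise_def euclidean_inner[of _ "gradF _ - _"] inner_diff_left intro!: sum.cong)
  qed
qed

lemma AE_scaled_dist_recursion:
  "AE \<omega> in M. \<forall>t\<ge>1.
     scaled_dist t \<omega> \<le> (1 - 2 / (real t + 32)) * scaled_dist (t - 1) \<omega>
                        + 2 / (real t + 32) * noise t \<omega> + 1 / (real t + 32)\<^sup>2
     \<and> (noise t \<omega>)\<^sup>2 \<le> scaled_dist (t - 1) \<omega>"
  using AE_stoch_grad_bounded AE_noise_eq
proof eventually_elim
  case (elim \<omega>)
  show ?case
  proof (intro allI impI conjI)
    fix t :: nat assume t: "t \<ge> 1"
    show "scaled_dist t \<omega> \<le> (1 - 2 / (real t + 32)) * scaled_dist (t - 1) \<omega>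
        + 2 / (real t + 32) * noise t \<omega> + 1 / (real t + 32)\<^sup>2"
      using scaled_dist_recursion[OF t] elim t by simp
    show "(noise t \<omega>)\<^sup>2 \<le> scaled_dist (t - 1) \<omega>"
      using drift_sq_le_scaled_dist[of "stoch_grad t \<omega>" "t - 1" \<omega>] elim t by simp
  qed
qed

lemma integrable_noise_coordinate:
  assumes t: "t \<ge> 1" and V: "V \<in> borel_measurable (filt (t - 1))"
    and V_bounded: "AE \<omega> in M. \<bar>V \<omega>\<bar> \<le> K" and b: "b \<in> Basis"
  shows "integrable M (\<lambda>\<omega>. V \<omega> * ((x (t - 1) \<omega> - xstar) \<bullet> b) * (stoch_grad t \<omega> \<bullet> b))"
proof (rule integrable_const_bound[where B = "K * (2 * B / lam) * B"])
  show "AE \<omega> in M. norm (V \<omega> * ((x (t - 1) \<omega> - xstar) \<bullet> b) * (stoch_grad t \<omega> \<bullet> b))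
      \<le> K * (2 * B / lam) * B"
    using V_bounded AE_dist_le AE_stoch_grad_bounded
  proof eventually_elim
    case (elim \<omega>)
    have "norm (x (t - 1) \<omega> - xstar) \<le> 2 * B / lam"
      using elim(2) lam_pos by (simp add: field_simps)
    then have "\<bar>(x (t - 1) \<omega> - xstar) \<bullet> b\<bar> \<le> 2 * B / lam"
      using Basis_le_norm[OF b] by (rule order_trans[rotated])
    moreover have "\<bar>stoch_grad t \<omega> \<bullet> b\<bar> \<le> B"
      using Basis_le_norm[OF b, of "stoch_grad t \<omega>"] elim(3) t by auto
    ultimately have "\<bar>V \<omega>\<bar> * \<bar>(x (t - 1) \<omega> - xstar) \<bullet> b\<bar> * \<bar>stoch_grad t \<omega> \<bullet> b\<bar>
        \<le> K * (2 * B / lam) * B"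
      using elim(1) B_pos lam_pos by (intro mult_mono) (auto intro: order_trans[OF abs_ge_zero])
    then show ?case by (simp add: abs_mult)
  qed
  show "(\<lambda>\<omega>. V \<omega> * ((x (t - 1) \<omega> - xstar) \<bullet> b) * (stoch_grad t \<omega> \<bullet> b)) \<in> borel_measurable M"
    using measurable_filt_M[OF V] measurable_filt_M[OF iterate_measurable]
      measurable_filt_M[OF stoch_grad_measurable[OF t]]
    by measurable
qed

lemma noise_orthogonal:
  assumes t: "t \<ge> 1" and V: "V \<in> borel_measurable (filt (t - 1))"
    and V_bounded: "AE \<omega> in M. \<bar>V \<omega>\<bar> \<le> K"
  shows "integrable M (\<lambda>\<omega>. V \<omega> * noise t \<omega>)" and "(\<integral>\<omega>. V \<omega> * noise t \<omega> \<partial>M) = 0"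
proof -
  interpret S: finite_measure_subalgebra M "filt (t - 1)"
    by (simp add: finite_measure_subalgebra_def finite_measure_subalgebra_axioms_def
        subalgebra_filt finite_measure_axioms)
  define f where "f b \<omega> = V \<omega> * ((x (t - 1) \<omega> - xstar) \<bullet> b)" for b \<omega>
  define h where "h b \<omega> = stoch_grad t \<omega> \<bullet> b" for b \<omega>
  define ce where "ce b = real_cond_exp M (filt (t - 1)) (h b)" for b
  have f_meas: "f b \<in> borel_measurable (filt (t - 1))" for b
    unfolding f_def using V iterate_measurable[of "t - 1"] by measurable
  have h_meas: "h b \<in> borel_measurable M" for b
    unfolding h_def using measurable_filt_M[OF stoch_grad_measurable[OF t]] by measurable
  have fh_int: "integrable M (\<lambda>\<omega>. f b \<omega> * h b \<omega>)" if "b \<in> Basis" for b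
    unfolding f_def h_def by (rule integrable_noise_coordinate[OF t V V_bounded that])
  have ce_int: "integrable M (\<lambda>\<omega>. f b \<omega> * ce b \<omega>)"
    and ce_eq: "(\<integral>\<omega>. f b \<omega> * ce b \<omega> \<partial>M) = (\<integral>\<omega>. f b \<omega> * h b \<omega> \<partial>M)" if "b \<in> Basis" for b
    using S.real_cond_exp_intg[OF fh_int[OF that] f_meas h_meas] by (simp_all add: ce_def)
  have V_noise: "V \<omega> * noise t \<omega> = lam / B\<^sup>2 * (\<Sum>b\<in>Basis. f b \<omega> * ce b \<omega> - f b \<omega> * h b \<omega>)" for \<omega>
    unfolding noise_def f_def h_def ce_def by (simp add: sum_distrib_left algebra_simps)
  show "integrable M (\<lambda>\<omega>. V \<omega> * noise t \<omega>)"
    unfolding V_noise using ce_int fh_int by auto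
  have "(\<integral>\<omega>. V \<omega> * noise t \<omega> \<partial>M)
      = lam / B\<^sup>2 * (\<Sum>b\<in>Basis. \<integral>\<omega>. f b \<omega> * ce b \<omega> - f b \<omega> * h b \<omega> \<partial>M)"
    unfolding V_noise using ce_int fh_int by (simp add: Bochner_Integration.integral_sum)
  also have "\<dots> = 0" using ce_int ce_eq fh_int by simp
  finally show "(\<integral>\<omega>. V \<omega> * noise t \<omega> \<partial>M) = 0" .
qed

definition potential :: "real \<Rightarrow> nat \<Rightarrow> 'w \<Rightarrow> real" where
  "potential A s \<omega> =
     exp (potential_weight A (real s + 32) * scaled_dist s \<omega> - (\<Sum>r\<in>{1..s}. 1 / (8 * (real r + 32 + A))))"

lemma potential_measurable: "potential A s \<in> borel_measurable (filt s)"
  unfolding potential_def using scaled_dist_measurable[of s] by measurable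

lemma potential_nonneg: "0 \<le> potential A s \<omega>"
  by (simp add: potential_def)

lemma potential_integrable:
  assumes A: "A \<ge> 0"
  shows "integrable M (potential A s)"
proof (rule integrable_const_bound[where B = "exp (potential_weight A (real s + 32) * 4)"])
  show "AE \<omega> in M. norm (potential A s \<omega>) \<le> exp (potential_weight A (real s + 32) * 4)"
    using AE_scaled_dist_le_4
  proof eventually_elim
    case (elim \<omega>)
    have "0 \<le> (\<Sum>r\<in>{1..s}. 1 / (8 * (real r + 32 + A)))" using A by (intro sum_nonneg) auto
    moreover have "potential_weight A (real s + 32) * scaled_dist s \<omega>
        \<le> potential_weight A (real s + 32) * 4"
      using elim A by (intro mult_left_mono) (auto simp: potential_weight_def)
    ultimately show ?case by (simp add: potential_def)
  qed
qed (rule measurable_filt_M[OF potential_measurable])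

lemma potential_Suc_le:
  fixes s :: nat and A :: real and \<omega> :: 'w
  defines "a \<equiv> real (Suc s) + 32"
  defines "b \<equiv> a / (8 * (a + A))" and "S \<equiv> (\<Sum>r\<in>{1..s}. 1 / (8 * (real r + 32 + A)))"
  assumes A: "A \<ge> 0"
    and recursion: "scaled_dist (Suc s) \<omega>
          \<le> (1 - 2 / a) * scaled_dist s \<omega> + 2 / a * noise (Suc s) \<omega> + 1 / a\<^sup>2"
    and noise: "(noise (Suc s) \<omega>)\<^sup>2 \<le> scaled_dist s \<omega>" and bounded: "scaled_dist s \<omega> \<le> 4"
  shows "potential A (Suc s) \<omega>
           \<le> potential A s \<omega> + exp (- S) * (2 * b * exp (b * (a - 2) * scaled_dist s \<omega>)) * noise (Suc s) \<omega>"
proof -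
  have a: "a \<ge> 4" "a - 1 = real s + 32" by (simp_all add: a_def)
  have "exp (potential_weight A a * scaled_dist (Suc s) \<omega> - 1 / (8 * (a + A)))
      \<le> exp (potential_weight A (a - 1) * scaled_dist s \<omega>)
         + 2 * b * exp (b * (a - 2) * scaled_dist s \<omega>) * noise (Suc s) \<omega>"
    unfolding b_def using recursion noise bounded scaled_dist_nonneg by (intro exp_potential_step a A)
  from mult_left_mono[OF this, of "exp (- S)"] show ?thesis
    by (simp add: potential_def S_def a a_def algebra_simps flip: exp_add)
qed

lemma potential_supermartingale:
  assumes A: "A \<ge> 0" and N: "N \<in> sets (filt s)"
  shows "(\<integral>\<omega>. potential A (Suc s) \<omega> * indicator N \<omega> \<partial>M) \<le> (\<integral>\<omega>. potential A s \<omega> * indicator N \<omega> \<partial>M)"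
proof -
  define a where "a = real (Suc s) + 32"
  define b where "b = a / (8 * (a + A))"
  define S where "S = (\<Sum>r\<in>{1..s}. 1 / (8 * (real r + 32 + A)))"
  define V where "V \<omega> = exp (- S) * (2 * b * exp (b * (a - 2) * scaled_dist s \<omega>)) * indicator N \<omega>" for \<omega>
  have a: "a \<ge> 4" and b: "0 \<le> b" using A by (simp_all add: a_def b_def)
  have N_M: "N \<in> sets M" using N subalgebra_filt by (auto simp: subalgebra_def)
  have V_bounded: "AE \<omega> in M. \<bar>V \<omega>\<bar> \<le> 2 * b * exp (b * (a - 2) * 4)"
    using AE_scaled_dist_le_4
  proof eventually_elim
    case (elim \<omega>)
    have "exp (- S) * (2 * b * exp (b * (a - 2) * scaled_dist s \<omega>)) \<le> 1 * (2 * b * exp (b * (a - 2) * 4))"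
      using elim a b A by (intro mult_mono) (auto simp: S_def mult_left_mono intro!: sum_nonneg)
    then show ?case using b by (auto simp: V_def abs_mult split: split_indicator)
  qed
  have V_noise: "integrable M (\<lambda>\<omega>. V \<omega> * noise (Suc s) \<omega>)" "(\<integral>\<omega>. V \<omega> * noise (Suc s) \<omega> \<partial>M) = 0"
  proof -
    have "V \<in> borel_measurable (filt s)"
      unfolding V_def using scaled_dist_measurable[of s] N by measurable
    then show "integrable M (\<lambda>\<omega>. V \<omega> * noise (Suc s) \<omega>)" "(\<integral>\<omega>. V \<omega> * noise (Suc s) \<omega> \<partial>M) = 0"
      using noise_orthogonal[of "Suc s" V] V_bounded by auto
  qed
  have "AE \<omega> in M. potential A (Suc s) \<omega> * indicator N \<omega>
      \<le> potential A s \<omega> * indicator N \<omega> + V \<omega> * noise (Suc s) \<omega>"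
    using AE_scaled_dist_recursion AE_scaled_dist_le_4
  proof eventually_elim
    case (elim \<omega>)
    have "potential A (Suc s) \<omega>
        \<le> potential A s \<omega> + exp (- S) * (2 * b * exp (b * (a - 2) * scaled_dist s \<omega>)) * noise (Suc s) \<omega>"
      unfolding a_def b_def S_def using elim by (intro potential_Suc_le A) auto
    then show ?case by (simp add: V_def split: split_indicator)
  qed
  then have "(\<integral>\<omega>. potential A (Suc s) \<omega> * indicator N \<omega> \<partial>M)
      \<le> (\<integral>\<omega>. potential A s \<omega> * indicator N \<omega> + V \<omega> * noise (Suc s) \<omega> \<partial>M)"
    by (intro integral_mono_AE Bochner_Integration.integrable_add V_noise(1)
        integrable_real_mult_indicator N_M potential_integrable A)
  also have "\<dots> = (\<integral>\<omega>. potential A s \<omega> * indicator N \<omega> \<partial>M)"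
    using V_noise N_M A by (simp add: integrable_real_mult_indicator potential_integrable)
  finally show ?thesis .
qed

lemma AE_potential_initial_le:
  assumes A: "A \<ge> 0"
  shows "AE \<omega> in M. potential A 0 \<omega> \<le> exp 16"
  using AE_scaled_dist_le_4
proof eventually_elim
  case (elim \<omega>)
  have "0 \<le> potential_weight A 32" "potential_weight A 32 \<le> 4"
    using A by (auto simp: potential_weight_def field_simps)
  then have "potential_weight A 32 * scaled_dist 0 \<omega> \<le> 4 * 4"
    using elim scaled_dist_nonneg by (intro mult_mono) auto
  then show ?case by (simp add: potential_def)
qed

lemma prob_potential_exceeds_le:
  assumes A: "A \<ge> 0" and \<delta>: "\<delta> > 0"
  shows "prob {\<omega> \<in> space M. \<exists>s\<le>T. exp 16 / \<delta> \<le> potential A s \<omega>} \<le> \<delta>"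
proof -
  have "exp 16 / \<delta> * prob {\<omega> \<in> space M. \<exists>s\<le>T. exp 16 / \<delta> \<le> potential A s \<omega>}
      \<le> (\<integral>\<omega>. potential A 0 \<omega> \<partial>M)"
    using \<delta> potential_measurable potential_integrable[OF A] potential_supermartingale[OF A]
      subalgebra_filt sets_filt_mono potential_nonneg
    by (intro nonneg_supermartingale_maximal_ineq[where Fs = filt]) auto
  also have "\<dots> \<le> (\<integral>\<omega>. exp 16 \<partial>M)"
    using AE_potential_initial_le[OF A] by (intro integral_mono_AE potential_integrable A) auto
  also have "\<dots> = exp 16" by (simp add: prob_space)
  finally show ?thesis using \<delta> by (simp add: field_simps)
qed

lemma dist_bound_if_potential_small:
  assumes t: "t \<ge> 1" and \<delta>: "0 < \<delta>" "\<delta> < 1"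
    and epoch: "real t + 32 \<le> 33 * 2 ^ k" "33 * 2 ^ k < 2 * (real t + 32)"
    and small: "potential (33 * 2 ^ k) t \<omega> < exp 16 / epoch_confidence \<delta> k"
  shows "(norm (x t \<omega> - xstar))\<^sup>2
           \<le> 1008 * (B\<^sup>2 / lam\<^sup>2) * ((ln (1 / \<delta>) + 2 * ln (ln (real t + 9))) / (real t + 32))"
proof -
  define A :: real where "A = 33 * 2 ^ k"
  define a where "a = real t + 32"
  define V where "V = ln (1 / \<delta>) + 2 * ln (ln (real t + 9))"
  have a: "33 \<le> a" using t by (simp add: a_def)
  have "0 < potential A t \<omega>" by (simp add: potential_def)
  then have "ln (potential A t \<omega>) < ln (exp 16 / epoch_confidence \<delta> k)"
    using small \<delta> by (simp add: A_def epoch_confidence_def)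
  then have "potential_weight A a * scaled_dist t \<omega> - (\<Sum>r\<in>{1..t}. 1 / (8 * (real r + 32 + A)))
      < 16 + ln (1 / \<delta>) + ln ((real k + 1) * (real k + 2))"
    using \<delta> by (simp add: potential_def a_def epoch_confidence_def ln_div ln_mult)
  moreover have "a / 24 * scaled_dist t \<omega> \<le> potential_weight A a * scaled_dist t \<omega>"
    using potential_weight_ge[of a A] a epoch scaled_dist_nonneg
    by (intro mult_right_mono) (auto simp: A_def a_def)
  moreover have "(\<Sum>r\<in>{1..t}. 1 / (8 * (real r + 32 + A))) \<le> 1 / 8"
    using epoch by (intro sum_potential_increments_le) (simp add: A_def)
  moreover have "ln ((real k + 1) * (real k + 2)) \<le> 4 + 2 * ln (ln (real t + 9))"
    using epoch(2) by (intro ln_epoch_index_le) simp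
  moreover have "1 \<le> V"
  proof -
    have "ln (1 / \<delta>) = - ln \<delta>" "ln \<delta> < 0" using \<delta> by (simp_all add: ln_div)
    then show ?thesis using ln_ln_plus_9_ge_half[of t] V_def by linarith
  qed
  ultimately have "a / 24 * scaled_dist t \<omega> < 42 * V" using V_def by linarith
  then have "scaled_dist t \<omega> \<le> 1008 * (V / a)" using a by (simp add: field_simps)
  have "(norm (x t \<omega> - xstar))\<^sup>2 = B\<^sup>2 / lam\<^sup>2 * scaled_dist t \<omega>"
    using lam_pos B_pos by (simp add: scaled_dist_def)
  also have "\<dots> \<le> B\<^sup>2 / lam\<^sup>2 * (1008 * (V / a))"
    using \<open>scaled_dist t \<omega> \<le> _\<close> by (intro mult_left_mono) auto
  finally show ?thesis by (simp add: V_def a_def mult_ac)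
qed

definition potential_exceeds :: "real \<Rightarrow> nat \<Rightarrow> 'w set" where
  "potential_exceeds \<delta> k =
     {\<omega> \<in> space M. \<exists>s\<le>33 * 2 ^ k. exp 16 / epoch_confidence \<delta> k \<le> potential (33 * 2 ^ k) s \<omega>}"

lemma potential_exceeds_events: "potential_exceeds \<delta> k \<in> events"
proof -
  have [measurable]: "potential A s \<in> borel_measurable M" for A s
    using measurable_filt_M[OF potential_measurable] .
  show ?thesis unfolding potential_exceeds_def by measurable
qed

lemma dist_bound_outside_potential_exceeds:
  assumes \<delta>: "0 < \<delta>" "\<delta> < 1" and t: "t \<ge> 1"
    and \<omega>: "\<omega> \<in> space M - (\<Union>k. potential_exceeds \<delta> k)"
  shows "(norm (x t \<omega> - xstar))\<^sup>2
           \<le> 1008 * (B\<^sup>2 / lam\<^sup>2) * ((ln (1 / \<delta>) + 2 * ln (ln (real t + 9))) / (real t + 32))"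
proof -
  obtain k where epoch: "real t + 32 \<le> 33 * 2 ^ k" "33 * 2 ^ k < 2 * (real t + 32)"
    using epoch_exists by blast
  then have "real (t + 32) \<le> real (33 * 2 ^ k)" by simp
  then have "t \<le> 33 * 2 ^ k" by (simp only: of_nat_le_iff)
  moreover have "\<omega> \<notin> potential_exceeds \<delta> k" "\<omega> \<in> space M" using \<omega> by auto
  ultimately have "\<not> exp 16 / epoch_confidence \<delta> k \<le> potential (33 * 2 ^ k) t \<omega>"
    unfolding potential_exceeds_def by blast
  then show ?thesis using dist_bound_if_potential_small[OF t \<delta> epoch] by simp
qed

theorem uniform_dist_bound:
  assumes \<delta>: "0 < \<delta>" "\<delta> < 1"
  shows "prob {\<omega> \<in> space M. \<forall>t\<ge>1. (norm (x t \<omega> - xstar))\<^sup>2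
           \<le> 1008 * (B\<^sup>2 / lam\<^sup>2) * ((ln (1 / \<delta>) + 2 * ln (ln (real t + 9))) / (real t + 32))} \<ge> 1 - \<delta>"
    (is "prob ?good \<ge> _")
proof -
  let ?bad = "\<Union>k. potential_exceeds \<delta> k"
  have bad_events: "range (potential_exceeds \<delta>) \<subseteq> events"
    using potential_exceeds_events by blast
  have "prob ?bad \<le> \<delta>"
  proof (rule prob_Union_le_sums[OF bad_events _ epoch_confidence_sums])
    show "prob (potential_exceeds \<delta> k) \<le> epoch_confidence \<delta> k" for k
      unfolding potential_exceeds_def using \<delta>
      by (intro prob_potential_exceeds_le) (auto simp: epoch_confidence_def)
  qed
  then have "1 - \<delta> \<le> prob (space M - ?bad)"
    using prob_compl[of ?bad] bad_events by auto
  also have "\<dots> \<le> prob ?good"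
  proof (rule finite_measure_mono)
    have [measurable]: "x s \<in> borel_measurable M" for s
      using measurable_filt_M[OF iterate_measurable] .
    show "?good \<in> events" by measurable
    show "space M - ?bad \<subseteq> ?good"
    proof
      fix \<omega> assume \<omega>: "\<omega> \<in> space M - ?bad"
      show "\<omega> \<in> ?good"
      proof (intro CollectI conjI allI impI)
        show "\<omega> \<in> space M" using \<omega> by simp
      qed (rule dist_bound_outside_potential_exceeds[OF \<delta> _ \<omega>])
    qed
  qed
  finally show ?thesis .
qed

end

theorem corollary1:
  fixes M :: "'w measure"
    and X :: "'x::euclidean_space set"
    and F :: "'x \<Rightarrow> real"
    and gradF :: "'x \<Rightarrow> 'x"
    and lam B \<delta> :: real
    and xstar x0 :: 'x
    and \<xi> :: "nat \<Rightarrow> 'w \<Rightarrow> 'e::euclidean_space"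
    and g :: "'x \<Rightarrow> 'e \<Rightarrow> 'x"
    and \<eta> :: "nat \<Rightarrow> real"
  assumes "prob_space M"
    and "compact X" and "convex X" and "interior X \<noteq> {}"
    and diff: "\<And>x. x \<in> X \<Longrightarrow> (F has_derivative (\<lambda>h. gradF x \<bullet> h)) (at x within X)"
    and "lam > 0"
    and strong_conv: "\<And>x y. x \<in> X \<Longrightarrow> y \<in> X \<Longrightarrow>
           F y \<ge> F x + (y - x) \<bullet> gradF x + lam / 2 * (norm (y - x))\<^sup>2"
    and "xstar \<in> X" and "\<And>y. y \<in> X \<Longrightarrow> F xstar \<le> F y"
    and iid_indep: "prob_space.indep_vars M (\<lambda>_. borel) \<xi> {1..}"
    and iid_dist: "\<And>i. i \<ge> 1 \<Longrightarrow> distr M borel (\<xi> i) = distr M borel (\<xi> 1)"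
    and g_meas: "(\<lambda>(x, e). g x e) \<in> borel_measurable (restrict_space borel (X \<times> UNIV))"
    and "B > 0"
    and "x0 \<in> X"
    and step: "\<And>t. \<eta> t = 1 / (lam * (real t + 32))"
    and unbiased: "\<And>t b. t \<ge> 1 \<Longrightarrow> b \<in> Basis \<Longrightarrow>
           AE \<omega> in M. real_cond_exp M (sgd_filtration M \<xi> (t - 1))
               (\<lambda>\<omega>. g (sgd_iter X \<eta> g x0 \<xi> (t - 1) \<omega>) (\<xi> t \<omega>) \<bullet> b) \<omega>
             = gradF (sgd_iter X \<eta> g x0 \<xi> (t - 1) \<omega>) \<bullet> b"
    and bounded: "AE \<omega> in M. \<forall>t\<ge>1.
           max (norm (g (sgd_iter X \<eta> g x0 \<xi> (t - 1) \<omega>) (\<xi> t \<omega>) - gradF (sgd_iter X \<eta> g x0 \<xi> (t - 1) \<omega>)))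
               (norm (g (sgd_iter X \<eta> g x0 \<xi> (t - 1) \<omega>) (\<xi> t \<omega>))) \<le> B"
    and "0 < \<delta>" and "\<delta> < 1"
  shows "measure M {\<omega> \<in> space M. \<forall>t\<ge>1.
           (norm (sgd_iter X \<eta> g x0 \<xi> t \<omega> - xstar))\<^sup>2
             \<le> 1008 * (B\<^sup>2 / lam\<^sup>2) * ((ln (1 / \<delta>) + 2 * ln (ln (real t + 9))) / (real t + 32))}
         \<ge> 1 - \<delta>"
proof -
  have "\<xi> i \<in> borel_measurable M" if "i \<ge> 1" for i
    using iid_indep that by (auto simp: prob_space.indep_vars_def[OF assms(1)])
  moreover have "closed X" using compact_imp_closed assms(2) .
  ultimately interpret projected_sgd M X F gradF lam xstar B x0 \<xi> g \<eta>
    by (intro projected_sgd.intro strongly_convex_minimum.intro projected_sgd_axioms.intro)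
       (use assms in auto)
  show ?thesis using uniform_dist_bound assms by simp
qed

end
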